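(* Let $f_\theta(t)=\frac{\pi}{4}-\bigl(\frac{\pi}{4}-\theta_0\bigr)\cos\bigl(\frac{2\pi}{T}t\bigr)$ and $f_r(t)=\frac{\pi}{2}+\bigl(\frac{\pi}{2}-r_0\bigr)\sin\bigl(\frac{2\pi}{T}t\bigr)$. Then: (i) $\theta$ and $f_\theta$ have the same symmetries (both are $T$-periodic, even, symmetric about $t=T/2$, and point-symmetric about $(T/4,\pi/4)$ and $(3T/4,\pi/4)$) and the same critical points, and $\theta'(t)>0$ iff $f_\theta'(t)>0$; (ii) $r$ and $f_r$ have the same symmetries (both are $T$-periodic, symmetric about $t=T/4$ and $t=3T/4$, and point-symmetric about $(0,\pi/2)$ and $(T/2,\pi/2)$) and the same critical points, and $r'(t)>0$ iff $f_r'(t)>0$; (iii) $\cos\alpha(t)$ and $\cos\bigl(\frac{2\pi}{T}t\bigr)$ have the same symmetries and the same critical points and are strictly increasing, respectively strictly decreasing, on the same intervals; (iv) $\sin\alpha(t)$ and $\sin\bigl(\frac{2\pi}{T}t\bigr)$ have the same symmetries and the same critical points and are strictly increasing, respectively strictly decreasing, on the same intervals.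
   Context: Fix an integer $n>1$. Consider the system $r'=\cos\alpha$, $\theta'=\sin\alpha/\sin r$, $\alpha'=(2n-2)\csc r\,\cos\alpha\,\cot(2\theta)-(2n-1)\cot r\,\sin\alpha$. By Carlotto–Schulz, there exist $T>0$ and $r_0\in(0,\pi)$ such that the solution with $\theta(0)=\pi/4$, $r(0)=r_0$, $\alpha(0)=-\pi/2$ satisfies $\theta(T/4)>0$, $r(T/4)=\pi/2$, $\alpha(T/4)=0$, and on $[0,T/4]$ the function $\theta$ is strictly decreasing while $r$ and $\alpha$ are strictly increasing. Moreover (Carlotto–Schulz symmetries) the graph of $\theta$ is symmetric about $t=T/4$ and $t=3T/4$ and point-symmetric about $(T/2,\pi/4)$ and $(0,\pi/4)$; the graph of $r$ is symmetric about $t=0$ and $t=T/2$ and point-symmetric about $(T/4,\pi/2)$ and $(3T/4,\pi/2)$; $\theta,r$ are $T$-periodic and $\alpha(t+T)=\alpha(t)+2\pi$. Now translate this solution by $T/4$ in time (i.e. replace $t$ by $t+T/4$), so that $r(0)=\pi/2$, $\alpha(0)=0$, and $\theta_0:=\theta(0)$ is the minimum of $\theta$, with $0<\theta_0<\pi/4$; then $r_0=r(-T/4)$. All statements refer to this translated solution $(r,\theta,\alpha)$. *)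

theory Defs
  imports "HOL-Analysis.Analysis"
begin

definition f_theta :: "real \<Rightarrow> real \<Rightarrow> real \<Rightarrow> real" where
  "f_theta T theta0 t = pi/4 - (pi/4 - theta0) * cos (2*pi/T * t)"

definition f_r :: "real \<Rightarrow> real \<Rightarrow> real \<Rightarrow> real" where
  "f_r T r0 t = pi/2 + (pi/2 - r0) * sin (2*pi/T * t)"

definition cos_like_sym :: "real \<Rightarrow> real \<Rightarrow> (real \<Rightarrow> real) \<Rightarrow> bool" where
  "cos_like_sym T c g \<longleftrightarrow>
     (\<forall>t. g (t + T) = g t) \<and>
     (\<forall>t. g (- t) = g t) \<and>
     (\<forall>t. g (T - t) = g t) \<and>
     (\<forall>t. g (T/2 - t) = 2*c - g t) \<and>
     (\<forall>t. g (3*T/2 - t) = 2*c - g t)"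

definition sin_like_sym :: "real \<Rightarrow> real \<Rightarrow> (real \<Rightarrow> real) \<Rightarrow> bool" where
  "sin_like_sym T c g \<longleftrightarrow>
     (\<forall>t. g (t + T) = g t) \<and>
     (\<forall>t. g (T/2 - t) = g t) \<and>
     (\<forall>t. g (3*T/2 - t) = g t) \<and>
     (\<forall>t. g (- t) = 2*c - g t) \<and>
     (\<forall>t. g (T - t) = 2*c - g t)"

end

theory Submission
  imports Defs
begin

text \<open>
  All eight functions are governed by the two reflections \<open>t \<mapsto> -t\<close> and
  \<open>t \<mapsto> T/2 - t\<close>: these generate all the listed symmetries, including the periodicity,
  and the quarter period \<open>[-T/4, 0]\<close> is a fundamental domain for them. A derivative
  inherits the reflection symmetries with the opposite parity, so the sign of each derivative
  everywhere is fixed by its sign on the quarter period. There \<open>\<alpha>\<close> and the phase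
  \<open>2\<pi>t/T\<close> both increase from \<open>-\<pi>/2\<close> to \<open>0\<close>, and the ODE forces \<open>\<alpha>' > 0\<close>;
  hence \<open>\<theta>' = sin \<alpha> / sin r\<close>, \<open>r' = cos \<alpha>\<close>, \<open>(cos \<alpha>)' = -\<alpha>' sin \<alpha>\<close> and
  \<open>(sin \<alpha>)' = \<alpha>' cos \<alpha>\<close> have the signs of the derivatives of the comparison
  functions. Derivatives of equal sign give the same critical points and, since the comparison
  derivatives vanish on no interval, the same intervals of strict monotonicity.
\<close>

section \<open>Functions with the symmetries of cosine and sine\<close>

lemma quarter_period_induct:
  fixes T :: real
  assumes "T > 0"
    and quarter: "\<And>t. t \<in> {-T/4..0} \<Longrightarrow> P t"
    and reflect_at_0: "\<And>t. P t \<Longrightarrow> P (- t)"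
    and reflect_at_quarter: "\<And>t. P t \<Longrightarrow> P (T/2 - t)"
  shows "P t"
proof -
  have half_period_shift: "P (s + of_int k * (T/2))" if "P s" for s k
  proof (induction k rule: int_induct[where k = 0])
    case base
    show ?case using that by simp
  next
    case (step1 i)
    have "s + of_int (i + 1) * (T/2) = T/2 - (- (s + of_int i * (T/2)))"
      by (simp add: algebra_simps)
    then show ?case using reflect_at_quarter reflect_at_0 step1 by metis
  next
    case (step2 i)
    have "s + of_int (i - 1) * (T/2) = - (T/2 - (s + of_int i * (T/2)))"
      by (simp add: field_simps)
    then show ?case using reflect_at_quarter reflect_at_0 step2 by metis
  qed
  define k where "k = \<lceil>t / (T/2) - 1/2\<rceil>"
  define s where "s = t - of_int k * (T/2)"
  have "t / (T/2) - 1/2 \<le> k" "k < t / (T/2) + 1/2"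
    unfolding k_def by linarith+
  then have "s \<in> {-T/4..T/4}"
    using \<open>T > 0\<close> unfolding s_def by (auto simp: field_simps)
  then have "P s"
    using quarter reflect_at_0[of "- s"] by (cases "s \<le> 0") auto
  then show ?thesis
    using half_period_shift[of s k] unfolding s_def by simp
qed

lemma reflection_symmetry_derivative:
  fixes f D :: "real \<Rightarrow> real"
  assumes deriv: "\<And>t. (f has_real_derivative D t) (at t)"
    and sym: "\<And>t. f (c - t) = a + b * f t"
  shows "D (c - t) = - b * D t"
proof -
  have "((\<lambda>t. f (c - t)) has_real_derivative D (c - t) * (- 1)) (at t)"
    by (rule DERIV_chain2[OF deriv]) (auto intro!: derivative_eq_intros)
  moreover have "((\<lambda>t. a + b * f t) has_real_derivative b * D t) (at t)"
    by (auto intro!: derivative_eq_intros deriv)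
  ultimately have "D (c - t) * (- 1) = b * D t"
    unfolding sym by (rule DERIV_unique)
  then show ?thesis by simp
qed

lemma sgn_eq_by_reflections:
  fixes D S :: "real \<Rightarrow> real"
  assumes "T > 0"
    and "\<And>t. D (- t) = e * D t" "\<And>t. S (- t) = e * S t"
    and "\<And>t. D (T/2 - t) = e' * D t" "\<And>t. S (T/2 - t) = e' * S t"
    and "\<And>t. t \<in> {-T/4..0} \<Longrightarrow> sgn (D t) = sgn (S t)"
  shows "sgn (D t) = sgn (S t)"
  using \<open>T > 0\<close> by (rule quarter_period_induct) (simp_all add: assms sgn_mult)

lemma cos_like_symI:
  assumes even: "\<And>t. g (- t) = g t" and reflect: "\<And>t. g (T/2 - t) = 2*c - g t"
  shows "cos_like_sym T c g"
proof -
  have half_shift: "g (t + T/2) = 2*c - g t" for t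
    using reflect[of "- t"] even[of t] by (simp add: add.commute)
  have "g (t + T) = g t" for t
    using half_shift[of t] half_shift[of "t + T/2"] by (simp add: add.assoc)
  moreover have "g (T - t) = g t" "g (3*T/2 - t) = 2*c - g t" for t
    using half_shift[of "T/2 - t"] half_shift[of "T - t"] reflect[of t] even
    by (simp_all add: algebra_simps)
  ultimately show ?thesis
    unfolding cos_like_sym_def using even reflect by blast
qed

lemma sin_like_symI:
  assumes odd: "\<And>t. g (- t) = 2*c - g t" and reflect: "\<And>t. g (T/2 - t) = g t"
  shows "sin_like_sym T c g"
proof -
  have half_shift: "g (t + T/2) = 2*c - g t" for t
    using reflect[of "- t"] odd[of t] by (simp add: add.commute)
  have "g (t + T) = g t" for t
    using half_shift[of t] half_shift[of "t + T/2"] by (simp add: add.assoc)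
  moreover have "g (T - t) = 2*c - g t" "g (3*T/2 - t) = g t" for t
    using half_shift[of "T/2 - t"] half_shift[of "T - t"] reflect[of t] odd
    by (simp_all add: algebra_simps)
  ultimately show ?thesis
    unfolding sin_like_sym_def using odd reflect by blast
qed

lemma cos_like_sym_deriv:
  assumes "cos_like_sym T c F" and deriv: "\<And>t. (F has_real_derivative D t) (at t)"
  shows "D (- t) = - D t" "D (T/2 - t) = D t"
proof -
  have "F (0 - t) = 0 + 1 * F t" "F (T/2 - t) = 2*c + (- 1) * F t" for t
    using \<open>cos_like_sym T c F\<close> unfolding cos_like_sym_def by simp_all
  from this[THEN reflection_symmetry_derivative[OF deriv]]
  show "D (- t) = - D t" "D (T/2 - t) = D t" by simp_all
qed

lemma sin_like_sym_deriv:
  assumes "sin_like_sym T c F" and deriv: "\<And>t. (F has_real_derivative D t) (at t)"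
  shows "D (- t) = D t" "D (T/2 - t) = - D t"
proof -
  have "F (0 - t) = 2*c + (- 1) * F t" "F (T/2 - t) = 0 + 1 * F t" for t
    using \<open>sin_like_sym T c F\<close> unfolding sin_like_sym_def by simp_all
  from this[THEN reflection_symmetry_derivative[OF deriv]]
  show "D (- t) = D t" "D (T/2 - t) = - D t" by simp_all
qed

lemma cos_like_sym_affine:
  "cos_like_sym T c g \<Longrightarrow> cos_like_sym T (a + b * c) (\<lambda>t. a + b * g t)"
  by (simp add: cos_like_sym_def right_diff_distrib)

lemma sin_like_sym_affine:
  "sin_like_sym T c g \<Longrightarrow> sin_like_sym T (a + b * c) (\<lambda>t. a + b * g t)"
  by (simp add: sin_like_sym_def right_diff_distrib)

lemma cos_like_sym_cos: "T \<noteq> 0 \<Longrightarrow> cos_like_sym T 0 (\<lambda>t. cos (2*pi/T * t))"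
  by (rule cos_like_symI) (simp_all add: right_diff_distrib)

lemma sin_like_sym_sin: "T \<noteq> 0 \<Longrightarrow> sin_like_sym T 0 (\<lambda>t. sin (2*pi/T * t))"
  by (rule sin_like_symI) (simp_all add: right_diff_distrib)

section \<open>Monotonicity and the sign of the derivative\<close>

lemma mono_on_Icc_imp_deriv_nonneg:
  fixes F :: "real \<Rightarrow> real"
  assumes mono: "mono_on {a..b} F" and "a < b" "t \<in> {a..b}"
    and deriv: "(F has_real_derivative D) (at t)"
  shows "0 \<le> D"
proof (rule tendsto_lowerbound)
  show "((\<lambda>y. (F y - F t) / (y - t)) \<longlongrightarrow> D) (at t within {a..b})"
    using has_field_derivative_at_within[OF deriv] by (simp add: has_field_derivative_iff)
  have "0 \<le> (F y - F t) / (y - t)" if "y \<in> {a..b}" "y \<noteq> t" for y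
  proof (cases "y < t")
    case True
    then show ?thesis using that \<open>t \<in> {a..b}\<close> mono_onD[OF mono, of y t] by (simp add: divide_nonpos_neg)
  next
    case False
    then show ?thesis using that \<open>t \<in> {a..b}\<close> mono_onD[OF mono, of t y] by (simp add: divide_nonneg_pos)
  qed
  then show "\<forall>\<^sub>F y in at t within {a..b}. 0 \<le> (F y - F t) / (y - t)"
    by (simp add: eventually_at_filter)
  show "at t within {a..b} \<noteq> bot"
    using \<open>a < b\<close> \<open>t \<in> {a..b}\<close> by (simp add: trivial_limit_within)
qed

lemma DERIV_zero_if_constant_on_open:
  fixes f :: "real \<Rightarrow> real"
  assumes "(f has_real_derivative D) (at t)" "open S" "t \<in> S" "\<And>u. u \<in> S \<Longrightarrow> f u = c"
  shows "D = 0"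
proof -
  have "((\<lambda>_. c) has_real_derivative 0) (at t)"
    by (rule DERIV_const)
  then have "(f has_real_derivative 0) (at t)"
    by (rule has_field_derivative_transform_within_open[OF _ assms(2,3)]) (simp add: assms(4))
  with assms(1) show ?thesis
    by (rule DERIV_unique)
qed

lemma strict_mono_on_if_deriv_nonneg:
  fixes F D :: "real \<Rightarrow> real"
  assumes deriv: "\<And>t. (F has_real_derivative D t) (at t)"
    and nonneg: "\<And>t. t \<in> {a..b} \<Longrightarrow> 0 \<le> D t"
    and nonzero: "\<And>x y. a \<le> x \<Longrightarrow> x < y \<Longrightarrow> y \<le> b \<Longrightarrow> \<exists>t\<in>{x<..<y}. D t \<noteq> 0"
  shows "strict_mono_on {a..b} F"
proof (rule strict_mono_onI)
  have mono: "F x \<le> F y" if "a \<le> x" "x \<le> y" "y \<le> b" for x y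
  proof (rule DERIV_nonneg_imp_nondecreasing[OF \<open>x \<le> y\<close>])
    fix u assume "x \<le> u" "u \<le> y"
    then show "\<exists>d. (F has_real_derivative d) (at u) \<and> 0 \<le> d"
      using deriv nonneg that by (meson atLeastAtMost_iff order_trans)
  qed
  fix x y assume xy: "x \<in> {a..b}" "y \<in> {a..b}" "x < y"
  then obtain t where t: "t \<in> {x<..<y}" "D t \<noteq> 0"
    using nonzero[of x y] by auto
  show "F x < F y"
  proof (rule ccontr)
    assume "\<not> F x < F y"
    then have "F u = F x" if "u \<in> {x<..<y}" for u
      using that xy mono[of x u] mono[of u y] by auto
    with t show False
      using DERIV_zero_if_constant_on_open[OF deriv open_greaterThanLessThan] by blast
  qed
qed

lemma strict_mono_on_iff_deriv_nonneg:
  fixes F D :: "real \<Rightarrow> real"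
  assumes deriv: "\<And>t. (F has_real_derivative D t) (at t)" and "a < b"
    and nonzero: "\<And>x y. a \<le> x \<Longrightarrow> x < y \<Longrightarrow> y \<le> b \<Longrightarrow> \<exists>t\<in>{x<..<y}. D t \<noteq> 0"
  shows "strict_mono_on {a..b} F \<longleftrightarrow> (\<forall>t\<in>{a..b}. 0 \<le> D t)"
  using mono_on_Icc_imp_deriv_nonneg[OF strict_mono_on_imp_mono_on \<open>a < b\<close> _ deriv]
    strict_mono_on_if_deriv_nonneg[OF deriv _ nonzero] by blast

lemma strict_antimono_on_iff_strict_mono_on_uminus:
  "strict_antimono_on A F \<longleftrightarrow> strict_mono_on A (\<lambda>t. - F t :: real)"
  by (simp add: monotone_on_def)

lemma strict_antimono_on_iff_deriv_nonpos:
  fixes F D :: "real \<Rightarrow> real"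
  assumes deriv: "\<And>t. (F has_real_derivative D t) (at t)" and "a < b"
    and nonzero: "\<And>x y. a \<le> x \<Longrightarrow> x < y \<Longrightarrow> y \<le> b \<Longrightarrow> \<exists>t\<in>{x<..<y}. D t \<noteq> 0"
  shows "strict_antimono_on {a..b} F \<longleftrightarrow> (\<forall>t\<in>{a..b}. D t \<le> 0)"
proof -
  have "strict_antimono_on {a..b} F \<longleftrightarrow> strict_mono_on {a..b} (\<lambda>t. - F t)"
    by (rule strict_antimono_on_iff_strict_mono_on_uminus)
  also have "\<dots> \<longleftrightarrow> (\<forall>t\<in>{a..b}. 0 \<le> - D t)"
    using deriv nonzero
    by (intro strict_mono_on_iff_deriv_nonneg[OF _ \<open>a < b\<close>]) (auto intro: DERIV_minus)
  finally show ?thesis by simp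
qed

definition same_monotonicity :: "(real \<Rightarrow> real) \<Rightarrow> (real \<Rightarrow> real) \<Rightarrow> bool" where
  "same_monotonicity F G \<longleftrightarrow>
     (\<forall>t. deriv F t = 0 \<longleftrightarrow> deriv G t = 0) \<and> (\<forall>t. 0 < deriv F t \<longleftrightarrow> 0 < deriv G t) \<and>
     (\<forall>a b. a < b \<longrightarrow>
        (strict_mono_on {a..b} F \<longleftrightarrow> strict_mono_on {a..b} G) \<and>
        (strict_antimono_on {a..b} F \<longleftrightarrow> strict_antimono_on {a..b} G))"

lemma same_monotonicity_if_sgn_deriv_eq:
  fixes F G D S :: "real \<Rightarrow> real"
  assumes dF: "\<And>t. (F has_real_derivative D t) (at t)"
    and dG: "\<And>t. (G has_real_derivative S t) (at t)"
    and sgn_eq: "\<And>t. sgn (D t) = sgn (S t)"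
    and nonzero: "\<And>x y. x < y \<Longrightarrow> \<exists>t\<in>{x<..<y}. S t \<noteq> 0"
  shows "same_monotonicity F G"
proof -
  have signs: "D t = 0 \<longleftrightarrow> S t = 0" "0 < D t \<longleftrightarrow> 0 < S t"
    "0 \<le> D t \<longleftrightarrow> 0 \<le> S t" "D t \<le> 0 \<longleftrightarrow> S t \<le> 0" for t
    using sgn_eq[of t] by (auto simp: sgn_if split: if_splits)
  have nonzeroD: "\<exists>t\<in>{x<..<y}. D t \<noteq> 0" if "x < y" for x y
    using nonzero[OF that] signs(1) by blast
  have "deriv F t = D t" "deriv G t = S t" for t
    using DERIV_imp_deriv dF dG by blast+
  then show ?thesis
    unfolding same_monotonicity_def
    using strict_mono_on_iff_deriv_nonneg[OF dF _ nonzeroD] strict_mono_on_iff_deriv_nonneg[OF dG _ nonzero]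
      strict_antimono_on_iff_deriv_nonpos[OF dF _ nonzeroD]
      strict_antimono_on_iff_deriv_nonpos[OF dG _ nonzero]
    by (simp add: signs)
qed

lemma ex_nonzero_in_interval_if_no_double_zero:
  fixes f f' :: "real \<Rightarrow> real"
  assumes deriv: "\<And>t. (f has_real_derivative f' t) (at t)"
    and no_double_zero: "\<And>t. f t = 0 \<Longrightarrow> f' t \<noteq> 0" and "x < y"
  shows "\<exists>t\<in>{x<..<y}. f t \<noteq> 0"
proof (rule ccontr)
  assume "\<not> ?thesis"
  then have zero: "f u = 0" if "u \<in> {x<..<y}" for u
    using that by blast
  have mid: "(x + y) / 2 \<in> {x<..<y}"
    using \<open>x < y\<close> by simp
  have "f' ((x + y) / 2) = 0"
    using DERIV_zero_if_constant_on_open[OF deriv open_greaterThanLessThan mid zero] .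
  with no_double_zero zero[OF mid] show False by blast
qed

lemma sin_scaled_nonzero_in_interval:
  fixes w x y :: real
  assumes "w \<noteq> 0" "x < y"
  shows "\<exists>t\<in>{x<..<y}. sin (w * t) \<noteq> 0"
proof (rule ex_nonzero_in_interval_if_no_double_zero[OF _ _ \<open>x < y\<close>])
  show "((\<lambda>t. sin (w * t)) has_real_derivative cos (w * t) * w) (at t)" for t
    by (auto intro!: derivative_eq_intros)
  show "cos (w * t) * w \<noteq> 0" if "sin (w * t) = 0" for t
    using that sin_cos_squared_add[of "w * t"] \<open>w \<noteq> 0\<close> by auto
qed

lemma cos_scaled_nonzero_in_interval:
  fixes w x y :: real
  assumes "w \<noteq> 0" "x < y"
  shows "\<exists>t\<in>{x<..<y}. cos (w * t) \<noteq> 0"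
proof (rule ex_nonzero_in_interval_if_no_double_zero[OF _ _ \<open>x < y\<close>])
  show "((\<lambda>t. cos (w * t)) has_real_derivative - sin (w * t) * w) (at t)" for t
    by (auto intro!: derivative_eq_intros)
  show "- sin (w * t) * w \<noteq> 0" if "cos (w * t) = 0" for t
    using that sin_cos_squared_add[of "w * t"] \<open>w \<noteq> 0\<close> by auto
qed

lemma cos_like_sym_same_monotonicity:
  fixes F G D S :: "real \<Rightarrow> real"
  assumes "T > 0" "cos_like_sym T c F" "cos_like_sym T c' G"
    and dF: "\<And>t. (F has_real_derivative D t) (at t)"
    and dG: "\<And>t. (G has_real_derivative S t) (at t)"
    and quarter: "\<And>t. t \<in> {-T/4..0} \<Longrightarrow> sgn (D t) = sgn (S t)"
    and nonzero: "\<And>x y. x < y \<Longrightarrow> \<exists>t\<in>{x<..<y}. S t \<noteq> 0"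
  shows "same_monotonicity F G"
proof (rule same_monotonicity_if_sgn_deriv_eq[OF dF dG _ nonzero])
  note D_sym = cos_like_sym_deriv[OF \<open>cos_like_sym T c F\<close> dF]
    and S_sym = cos_like_sym_deriv[OF \<open>cos_like_sym T c' G\<close> dG]
  show "sgn (D t) = sgn (S t)" for t
    by (rule sgn_eq_by_reflections[OF \<open>T > 0\<close>, where e = "- 1" and e' = 1])
      (simp_all add: D_sym S_sym quarter)
qed

lemma sin_like_sym_same_monotonicity:
  fixes F G D S :: "real \<Rightarrow> real"
  assumes "T > 0" "sin_like_sym T c F" "sin_like_sym T c' G"
    and dF: "\<And>t. (F has_real_derivative D t) (at t)"
    and dG: "\<And>t. (G has_real_derivative S t) (at t)"
    and quarter: "\<And>t. t \<in> {-T/4..0} \<Longrightarrow> sgn (D t) = sgn (S t)"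
    and nonzero: "\<And>x y. x < y \<Longrightarrow> \<exists>t\<in>{x<..<y}. S t \<noteq> 0"
  shows "same_monotonicity F G"
proof (rule same_monotonicity_if_sgn_deriv_eq[OF dF dG _ nonzero])
  note D_sym = sin_like_sym_deriv[OF \<open>sin_like_sym T c F\<close> dF]
    and S_sym = sin_like_sym_deriv[OF \<open>sin_like_sym T c' G\<close> dG]
  show "sgn (D t) = sgn (S t)" for t
    by (rule sgn_eq_by_reflections[OF \<open>T > 0\<close>, where e = 1 and e' = "- 1"])
      (simp_all add: D_sym S_sym quarter)
qed

section \<open>Signs on the fundamental quarter period\<close>

lemma strict_mono_on_Icc_values:
  fixes f :: "real \<Rightarrow> real"
  assumes "strict_mono_on {a..b} f" "t \<in> {a..b}"
  shows "f t \<in> {f a..f b}" "f t = f a \<longleftrightarrow> t = a" "f t = f b \<longleftrightarrow> t = b"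
proof -
  from \<open>t \<in> {a..b}\<close> have "a \<in> {a..b}" "b \<in> {a..b}" by auto
  with assms show "f t \<in> {f a..f b}" "f t = f a \<longleftrightarrow> t = a" "f t = f b \<longleftrightarrow> t = b"
    by (auto simp: strict_mono_on_less_eq strict_mono_on_eq)
qed

lemma strict_mono_on_scale: "0 < c \<Longrightarrow> strict_mono_on A (\<lambda>t. c * t :: real)"
  by (rule strict_mono_onI) simp

lemma sgn_sin_eq_on_quadrant:
  fixes x y :: real
  assumes "x \<in> {-pi/2..0}" "y \<in> {-pi/2..0}" "x = 0 \<longleftrightarrow> y = 0"
  shows "sgn (sin x) = sgn (sin y)"
proof -
  have "sgn (sin z) = (if z = 0 then 0 else - 1)" if "z \<in> {-pi/2..0}" for z :: real
    using that sin_gt_zero[of "- z"] by auto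
  with assms show ?thesis by simp
qed

lemma sgn_cos_eq_on_quadrant:
  fixes x y :: real
  assumes "x \<in> {-pi/2..0}" "y \<in> {-pi/2..0}" "x = - pi/2 \<longleftrightarrow> y = - pi/2"
  shows "sgn (cos x) = sgn (cos y)"
proof -
  have "sgn (cos z) = (if z = - pi/2 then 0 else 1)" if "z \<in> {-pi/2..0}" for z :: real
    using that cos_gt_zero_pi[of z] by auto
  with assms show ?thesis by simp
qed

lemma cot_nonneg: "0 < x \<Longrightarrow> x \<le> pi/2 \<Longrightarrow> 0 \<le> cot (x :: real)"
  unfolding cot_def using cos_ge_zero[of x] sin_gt_zero[of x] by simp

lemma cos_like_sym_f_theta:
  assumes "T \<noteq> 0"
  shows "cos_like_sym T (pi/4) (f_theta T theta0)"
proof -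
  have "f_theta T theta0 = (\<lambda>t. pi/4 + (theta0 - pi/4) * cos (2*pi/T * t))"
    by (simp add: fun_eq_iff f_theta_def algebra_simps)
  then show ?thesis
    using cos_like_sym_affine[OF cos_like_sym_cos[OF assms], of "pi/4" "theta0 - pi/4"] by simp
qed

lemma sin_like_sym_f_r:
  assumes "T \<noteq> 0"
  shows "sin_like_sym T (pi/2) (f_r T r0)"
  using sin_like_sym_affine[OF sin_like_sym_sin[OF assms], of "pi/2" "pi/2 - r0"]
  by (simp add: f_r_def[abs_def])

lemma f_theta_deriv:
  "(f_theta T theta0 has_real_derivative (pi/4 - theta0) * sin (2*pi/T * t) * (2*pi/T)) (at t)"
proof -
  \<comment> \<open>With an abstract frequency \<open>w\<close>, \<open>derivative_eq_intros\<close> does not differentiate the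
    quotient \<open>2*pi/T\<close>, which would require \<open>T \<noteq> 0\<close>.\<close>
  have "((\<lambda>t. pi/4 - (pi/4 - theta0) * cos (w * t))
      has_real_derivative (pi/4 - theta0) * sin (w * t) * w) (at t)" for w
    by (auto intro!: derivative_eq_intros)
  then show ?thesis
    unfolding f_theta_def[abs_def] .
qed

lemma f_r_deriv:
  "(f_r T r0 has_real_derivative (pi/2 - r0) * cos (2*pi/T * t) * (2*pi/T)) (at t)"
proof -
  have "((\<lambda>t. pi/2 + (pi/2 - r0) * sin (w * t))
      has_real_derivative (pi/2 - r0) * cos (w * t) * w) (at t)" for w
    by (auto intro!: derivative_eq_intros)
  then show ?thesis
    unfolding f_r_def[abs_def] .
qed

section \<open>The translated Carlotto--Schulz solution\<close>

locale carlotto_schulz_orbit =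
  fixes n :: nat and T r0 :: real and r theta alpha :: "real \<Rightarrow> real"
  assumes n_gt_1: "n > 1" and T_pos: "T > 0" and r0_pos: "0 < r0"
    and ode_r: "\<And>t. (r has_real_derivative cos (alpha t)) (at t)"
    and ode_theta: "\<And>t. (theta has_real_derivative sin (alpha t) / sin (r t)) (at t)"
    and ode_alpha: "\<And>t. (alpha has_real_derivative
            (2 * real n - 2) * (1 / sin (r t)) * cos (alpha t) * cot (2 * theta t)
          - (2 * real n - 1) * cot (r t) * sin (alpha t)) (at t)"
    and at_minus_quarter: "theta (-T/4) = pi/4" "r (-T/4) = r0" "alpha (-T/4) = - pi/2"
    and at_zero: "theta 0 > 0" "r 0 = pi/2" "alpha 0 = 0"
    and monotone: "strict_antimono_on {-T/4..0} theta" "strict_mono_on {-T/4..0} r"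
      "strict_mono_on {-T/4..0} alpha"
    and theta_sym: "\<And>t. theta (- t) = theta t" "\<And>t. theta (T/2 - t) = pi/2 - theta t"
    and r_sym: "\<And>t. r (- t) = pi - r t" "\<And>t. r (T/2 - t) = r t"
begin

lemma theta_cos_like: "cos_like_sym T (pi/4) theta"
  by (rule cos_like_symI) (simp_all add: theta_sym)

lemma r_sin_like: "sin_like_sym T (pi/2) r"
  by (rule sin_like_symI) (simp_all add: r_sym)

lemma T_nonzero: "T \<noteq> 0"
  using T_pos by simp

lemma theta_on_quarter:
  assumes "t \<in> {-T/4..0}"
  shows "theta t \<in> {theta 0..pi/4}"
  using strict_mono_on_Icc_values(1)[OF monotone(1)[unfolded strict_antimono_on_iff_strict_mono_on_uminus] assms]
  unfolding at_minus_quarter(1) by simp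

lemma theta_0_less: "theta 0 < pi/4"
  using strict_mono_on_Icc_values(1,2)[OF monotone(1)[unfolded strict_antimono_on_iff_strict_mono_on_uminus], of 0] T_pos
  unfolding at_minus_quarter(1) by auto

lemma r_on_quarter:
  assumes "t \<in> {-T/4..0}"
  shows "r t \<in> {r0..pi/2}" "r t = pi/2 \<longleftrightarrow> t = 0"
  using strict_mono_on_Icc_values[OF monotone(2) assms] unfolding at_minus_quarter(2) at_zero(2) by simp_all

lemma r0_less: "r0 < pi/2"
  using r_on_quarter(1,2)[of "-T/4"] T_pos at_minus_quarter(2) by auto

lemma alpha_on_quarter:
  assumes "t \<in> {-T/4..0}"
  shows "alpha t \<in> {-pi/2..0}" "alpha t = -pi/2 \<longleftrightarrow> t = -T/4" "alpha t = 0 \<longleftrightarrow> t = 0"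
  using strict_mono_on_Icc_values[OF monotone(3) assms] unfolding at_minus_quarter(3) at_zero(3) .

lemma phase_on_quarter:
  assumes "t \<in> {-T/4..0}"
  shows "2*pi/T * t \<in> {-pi/2..0}" "2*pi/T * t = -pi/2 \<longleftrightarrow> t = -T/4"
    "2*pi/T * t = 0 \<longleftrightarrow> t = 0"
proof -
  have "2*pi/T * (-T/4) = -pi/2" "2*pi/T * 0 = 0"
    using T_pos by simp_all
  then show "2*pi/T * t \<in> {-pi/2..0}" "2*pi/T * t = -pi/2 \<longleftrightarrow> t = -T/4"
    "2*pi/T * t = 0 \<longleftrightarrow> t = 0"
    using strict_mono_on_Icc_values[OF strict_mono_on_scale assms, of "2*pi/T"] T_pos by simp_all
qed

lemma sgn_sin_alpha_on_quarter:
  assumes "t \<in> {-T/4..0}"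
  shows "sgn (sin (alpha t)) = sgn (sin (2*pi/T * t))"
  using alpha_on_quarter[OF assms] phase_on_quarter[OF assms] by (intro sgn_sin_eq_on_quadrant) blast+

lemma sgn_cos_alpha_on_quarter:
  assumes "t \<in> {-T/4..0}"
  shows "sgn (cos (alpha t)) = sgn (cos (2*pi/T * t))"
  using alpha_on_quarter[OF assms] phase_on_quarter[OF assms] by (intro sgn_cos_eq_on_quadrant) blast+

lemma r_between_0_pi: "r t \<in> {0<..<pi}"
  using T_pos
proof (rule quarter_period_induct[where P = "\<lambda>t. r t \<in> {0<..<pi}"])
  show "r t \<in> {0<..<pi}" if "t \<in> {-T/4..0}" for t
    using r_on_quarter(1)[OF that] r0_pos pi_gt_zero by auto
  show "r (- t) \<in> {0<..<pi}" "r (T/2 - t) \<in> {0<..<pi}" if "r t \<in> {0<..<pi}" for t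
    using that by (auto simp: r_sym)
qed

lemma sin_r_pos: "0 < sin (r t)"
  using r_between_0_pi sin_gt_zero by auto

lemma alpha_has_deriv: "(alpha has_real_derivative deriv alpha t) (at t)"
  by (metis DERIV_imp_deriv ode_alpha)

lemma alpha_deriv_pos_on_quarter:
  assumes t: "t \<in> {-T/4..0}"
  shows "0 < deriv alpha t"
proof -
  define first where "first = (2 * real n - 2) * (1 / sin (r t)) * cos (alpha t) * cot (2 * theta t)"
  define second where "second = (2 * real n - 1) * cot (r t) * - sin (alpha t)"
  have "deriv alpha t = first + second"
    unfolding first_def second_def using DERIV_imp_deriv[OF ode_alpha] by simp
  note alpha_bounds = alpha_on_quarter[OF t] and r_bounds = r_on_quarter[OF t]
  have n_coeffs: "0 < 2 * real n - 2" "0 < 2 * real n - 1"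
    using n_gt_1 by simp_all
  have "0 \<le> cos (alpha t)"
    using alpha_bounds(1) by (intro cos_ge_zero) auto
  moreover have "0 \<le> cot (2 * theta t)"
    using theta_on_quarter[OF t] at_zero(1) by (intro cot_nonneg) auto
  ultimately have "0 \<le> first"
    unfolding first_def using n_coeffs sin_r_pos[of t] by simp
  have "0 \<le> cot (r t)"
    using r_bounds(1) r0_pos by (intro cot_nonneg) auto
  moreover have "0 \<le> - sin (alpha t)"
    using alpha_bounds(1) sin_ge_zero[of "- alpha t"] by auto
  ultimately have "0 \<le> second"
    unfolding second_def using n_coeffs by (intro mult_nonneg_nonneg) simp_all
  consider "t = 0" | "t < 0"
    using t by fastforce
  then have "0 < first \<or> 0 < second"
  proof cases
    case 1
    have "0 < cot (2 * theta 0)"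
      using theta_0_less at_zero(1) by (intro cot_gt_zero) auto
    then show ?thesis
      unfolding first_def using 1 at_zero(3) n_coeffs sin_r_pos[of 0] by simp
  next
    case 2
    have "0 < cot (r t)"
      using r_bounds r0_pos 2 by (intro cot_gt_zero) auto
    moreover have "0 < - sin (alpha t)"
      using alpha_bounds 2 sin_gt_zero[of "- alpha t"] by auto
    ultimately show ?thesis
      unfolding second_def using n_coeffs by (intro disjI2 mult_pos_pos) simp_all
  qed
  with \<open>0 \<le> first\<close> \<open>0 \<le> second\<close> \<open>deriv alpha t = first + second\<close> show ?thesis
    by linarith
qed

lemma cos_alpha_cos_like: "cos_like_sym T 0 (\<lambda>t. cos (alpha t))"
  using sin_like_sym_deriv[OF r_sin_like ode_r] by (intro cos_like_symI) simp_all

lemma sin_alpha_sin_like: "sin_like_sym T 0 (\<lambda>t. sin (alpha t))"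
proof (rule sin_like_symI)
  note theta'_sym = cos_like_sym_deriv[OF theta_cos_like ode_theta]
  show "sin (alpha (- t)) = 2 * 0 - sin (alpha t)" "sin (alpha (T/2 - t)) = sin (alpha t)" for t
    using theta'_sym[of t] sin_r_pos[of t] by (simp_all add: r_sym) (simp_all add: field_simps)
qed

lemma theta_same_monotonicity: "same_monotonicity theta (f_theta T (theta 0))"
proof (rule cos_like_sym_same_monotonicity[OF T_pos theta_cos_like cos_like_sym_f_theta[OF T_nonzero]
      ode_theta f_theta_deriv])
  show "sgn (sin (alpha t) / sin (r t)) = sgn ((pi/4 - theta 0) * sin (2*pi/T * t) * (2*pi/T))"
    if "t \<in> {-T/4..0}" for t
    using sgn_sin_alpha_on_quarter[OF that] sin_r_pos[of t] theta_0_less T_pos by (simp add: sgn_mult)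
  show "\<exists>t\<in>{x<..<y}. (pi/4 - theta 0) * sin (2*pi/T * t) * (2*pi/T) \<noteq> 0" if "x < y" for x y
    using sin_scaled_nonzero_in_interval[OF _ that, of "2*pi/T"] theta_0_less T_pos by auto
qed

lemma r_same_monotonicity: "same_monotonicity r (f_r T r0)"
proof (rule sin_like_sym_same_monotonicity[OF T_pos r_sin_like sin_like_sym_f_r[OF T_nonzero]
      ode_r f_r_deriv])
  show "sgn (cos (alpha t)) = sgn ((pi/2 - r0) * cos (2*pi/T * t) * (2*pi/T))"
    if "t \<in> {-T/4..0}" for t
    using sgn_cos_alpha_on_quarter[OF that] r0_less T_pos by (simp add: sgn_mult)
  show "\<exists>t\<in>{x<..<y}. (pi/2 - r0) * cos (2*pi/T * t) * (2*pi/T) \<noteq> 0" if "x < y" for x y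
    using cos_scaled_nonzero_in_interval[OF _ that, of "2*pi/T"] r0_less T_pos by auto
qed

lemma cos_alpha_same_monotonicity:
  "same_monotonicity (\<lambda>t. cos (alpha t)) (\<lambda>t. cos (2*pi/T * t))"
proof (rule cos_like_sym_same_monotonicity[OF T_pos cos_alpha_cos_like cos_like_sym_cos[OF T_nonzero]])
  show "((\<lambda>t. cos (alpha t)) has_real_derivative - sin (alpha t) * deriv alpha t) (at t)" for t
    by (rule DERIV_chain2[OF DERIV_cos alpha_has_deriv])
  show "((\<lambda>t. cos (2*pi/T * t)) has_real_derivative - sin (2*pi/T * t) * (2*pi/T)) (at t)" for t
    by (rule DERIV_chain2[OF DERIV_cos DERIV_cmult_Id])
  show "sgn (- sin (alpha t) * deriv alpha t) = sgn (- sin (2*pi/T * t) * (2*pi/T))"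
    if "t \<in> {-T/4..0}" for t
    using sgn_sin_alpha_on_quarter[OF that] alpha_deriv_pos_on_quarter[OF that] T_pos by (simp add: sgn_mult)
  show "\<exists>t\<in>{x<..<y}. - sin (2*pi/T * t) * (2*pi/T) \<noteq> 0" if "x < y" for x y
    using sin_scaled_nonzero_in_interval[OF _ that, of "2*pi/T"] T_pos by auto
qed

lemma sin_alpha_same_monotonicity:
  "same_monotonicity (\<lambda>t. sin (alpha t)) (\<lambda>t. sin (2*pi/T * t))"
proof (rule sin_like_sym_same_monotonicity[OF T_pos sin_alpha_sin_like sin_like_sym_sin[OF T_nonzero]])
  show "((\<lambda>t. sin (alpha t)) has_real_derivative cos (alpha t) * deriv alpha t) (at t)" for t
    by (rule DERIV_chain2[OF DERIV_sin alpha_has_deriv])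
  show "((\<lambda>t. sin (2*pi/T * t)) has_real_derivative cos (2*pi/T * t) * (2*pi/T)) (at t)" for t
    by (rule DERIV_chain2[OF DERIV_sin DERIV_cmult_Id])
  show "sgn (cos (alpha t) * deriv alpha t) = sgn (cos (2*pi/T * t) * (2*pi/T))"
    if "t \<in> {-T/4..0}" for t
    using sgn_cos_alpha_on_quarter[OF that] alpha_deriv_pos_on_quarter[OF that] T_pos by (simp add: sgn_mult)
  show "\<exists>t\<in>{x<..<y}. cos (2*pi/T * t) * (2*pi/T) \<noteq> 0" if "x < y" for x y
    using cos_scaled_nonzero_in_interval[OF _ that, of "2*pi/T"] T_pos by auto
qed

end

theorem mainTheorem3:
  fixes n :: nat and T r0 theta0 :: real and r theta alpha :: "real \<Rightarrow> real"
  assumes n: "n > 1"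
    and T: "T > 0"
    and r0: "0 < r0" "r0 < pi"
    \<comment> \<open>the ODE system\<close>
    and ode_r: "\<And>t. (r has_real_derivative cos (alpha t)) (at t)"
    and ode_theta: "\<And>t. (theta has_real_derivative sin (alpha t) / sin (r t)) (at t)"
    and ode_alpha: "\<And>t. (alpha has_real_derivative
            (2 * real n - 2) * (1 / sin (r t)) * cos (alpha t) * cot (2 * theta t)
          - (2 * real n - 1) * cot (r t) * sin (alpha t)) (at t)"
    \<comment> \<open>Carlotto--Schulz data, translated by T/4\<close>
    and init1: "theta (-T/4) = pi/4" "r (-T/4) = r0" "alpha (-T/4) = - pi/2"
    and init2: "theta 0 > 0" "r 0 = pi/2" "alpha 0 = 0"
    and mon: "strict_antimono_on {-T/4..0} theta" "strict_mono_on {-T/4..0} r"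
             "strict_mono_on {-T/4..0} alpha"
    and sym_theta: "\<And>t. theta (- t) = theta t" "\<And>t. theta (T - t) = theta t"
                   "\<And>t. theta (T/2 - t) = pi/2 - theta t"
                   "\<And>t. theta (- T/2 - t) = pi/2 - theta t"
    and sym_r: "\<And>t. r (- T/2 - t) = r t" "\<And>t. r (T/2 - t) = r t"
               "\<And>t. r (- t) = pi - r t" "\<And>t. r (T - t) = pi - r t"
    and per: "\<And>t. theta (t + T) = theta t" "\<And>t. r (t + T) = r t"
             "\<And>t. alpha (t + T) = alpha t + 2*pi"
    and theta0: "theta0 = theta 0" "\<And>t. theta0 \<le> theta t" "0 < theta0" "theta0 < pi/4"
  shows
    \<comment> \<open>(i)\<close>
    "(cos_like_sym T (pi/4) theta \<and> cos_like_sym T (pi/4) (f_theta T theta0) \<and>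
     (\<forall>t. deriv theta t = 0 \<longleftrightarrow> deriv (f_theta T theta0) t = 0) \<and>
     (\<forall>t. deriv theta t > 0 \<longleftrightarrow> deriv (f_theta T theta0) t > 0))
     \<and>
    \<comment> \<open>(ii)\<close>
    (sin_like_sym T (pi/2) r \<and> sin_like_sym T (pi/2) (f_r T r0) \<and>
     (\<forall>t. deriv r t = 0 \<longleftrightarrow> deriv (f_r T r0) t = 0) \<and>
     (\<forall>t. deriv r t > 0 \<longleftrightarrow> deriv (f_r T r0) t > 0))
     \<and>
    \<comment> \<open>(iii)\<close>
    (cos_like_sym T 0 (\<lambda>t. cos (alpha t)) \<and> cos_like_sym T 0 (\<lambda>t. cos (2*pi/T * t)) \<and>
     (\<forall>t. deriv (\<lambda>t. cos (alpha t)) t = 0 \<longleftrightarrow> deriv (\<lambda>t. cos (2*pi/T * t)) t = 0) \<and>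
     (\<forall>a b. a < b \<longrightarrow>
        (strict_mono_on {a..b} (\<lambda>t. cos (alpha t)) \<longleftrightarrow>
         strict_mono_on {a..b} (\<lambda>t. cos (2*pi/T * t))) \<and>
        (strict_antimono_on {a..b} (\<lambda>t. cos (alpha t)) \<longleftrightarrow>
         strict_antimono_on {a..b} (\<lambda>t. cos (2*pi/T * t)))))
     \<and>
    \<comment> \<open>(iv)\<close>
    (sin_like_sym T 0 (\<lambda>t. sin (alpha t)) \<and> sin_like_sym T 0 (\<lambda>t. sin (2*pi/T * t)) \<and>
     (\<forall>t. deriv (\<lambda>t. sin (alpha t)) t = 0 \<longleftrightarrow> deriv (\<lambda>t. sin (2*pi/T * t)) t = 0) \<and>
     (\<forall>a b. a < b \<longrightarrow>
        (strict_mono_on {a..b} (\<lambda>t. sin (alpha t)) \<longleftrightarrow>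
         strict_mono_on {a..b} (\<lambda>t. sin (2*pi/T * t))) \<and>
        (strict_antimono_on {a..b} (\<lambda>t. sin (alpha t)) \<longleftrightarrow>
         strict_antimono_on {a..b} (\<lambda>t. sin (2*pi/T * t)))))"
proof -
  interpret carlotto_schulz_orbit n T r0 r theta alpha
    by unfold_locales
      (fact n T r0(1) ode_r ode_theta ode_alpha init1 init2 mon sym_theta(1,3) sym_r(3,2))+
  show ?thesis
    unfolding theta0(1)
    using theta_cos_like cos_like_sym_f_theta[OF T_nonzero] theta_same_monotonicity
      r_sin_like sin_like_sym_f_r[OF T_nonzero] r_same_monotonicity
      cos_alpha_cos_like cos_like_sym_cos[OF T_nonzero] cos_alpha_same_monotonicity
      sin_alpha_sin_like sin_like_sym_sin[OF T_nonzero] sin_alpha_same_monotonicity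
    unfolding same_monotonicity_def by simp
qed

end
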